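(* There exists $\theta_0\in(0,\pi/4)$, depending only on $\alpha$, such that for every $\theta\in(0,\theta_0)$ there exists $a_0(\theta)\ge1$ such that for every $a>a_0(\theta)$ and every $b\in(0,1)$ the following holds: if $p,q\in\mathbb H$ satisfy $p\notin B(q,r_q)$ and $q\notin B(p,r_p)$, then at most one of $p,q$ belongs to $\mathcal P(a,b,\theta)$.
   Context: $\mathbb H=\mathbb R^3$, $p=(x_p,y_p,z_p)$, group law $(x,y,z)\cdot(x',y',z')=(x+x',y+y',z+z'+\tfrac12(xy'-yx'))$, dilations $\delta_\lambda(x,y,z)=(\lambda x,\lambda y,\lambda^2z)$. Fix $\alpha>0$ such that $d_\alpha(p,q)=\inf\{r>0:\delta_{1/r}(p^{-1}\cdot q)\in B_\alpha\}$ is a distance, $B_\alpha$ the closed Euclidean ball of radius $\alpha$ at $0$. $B(p,r)=\{q:d_\alpha(q,p)\le r\}$, $r_p=d_\alpha(0,p)$. $\mathcal P(a,b,\theta)=\{p: x_p>a,\ |z_p|<b,\ |y_p|<x_p\tan\theta\}$. *)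

theory Defs
  imports Complex_Main
begin

type_synonym heis = "real \<times> real \<times> real"

definition hmult :: "heis \<Rightarrow> heis \<Rightarrow> heis" where
  "hmult p q = (case p of (x,y,z) \<Rightarrow> case q of (x',y',z') \<Rightarrow>
      (x + x', y + y', z + z' + (x*y' - y*x') / 2))"

definition hinv :: "heis \<Rightarrow> heis" where
  "hinv p = (case p of (x,y,z) \<Rightarrow> (-x, -y, -z))"

definition hdil :: "real \<Rightarrow> heis \<Rightarrow> heis" where
  "hdil l p = (case p of (x,y,z) \<Rightarrow> (l*x, l*y, l^2*z))"

definition eball :: "real \<Rightarrow> heis set" where
  "eball \<alpha> = {p. case p of (x,y,z) \<Rightarrow> sqrt (x^2 + y^2 + z^2) \<le> \<alpha>}"

definition d_alpha :: "real \<Rightarrow> heis \<Rightarrow> heis \<Rightarrow> real" where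
  "d_alpha \<alpha> p q = Inf {r. r > 0 \<and> hdil (1/r) (hmult (hinv p) q) \<in> eball \<alpha>}"

definition is_distance :: "(heis \<Rightarrow> heis \<Rightarrow> real) \<Rightarrow> bool" where
  "is_distance d \<longleftrightarrow>
     (\<forall>p q. d p q \<ge> 0) \<and> (\<forall>p q. d p q = 0 \<longleftrightarrow> p = q) \<and>
     (\<forall>p q. d p q = d q p) \<and> (\<forall>p q s. d p s \<le> d p q + d q s)"

definition hball :: "real \<Rightarrow> heis \<Rightarrow> real \<Rightarrow> heis set" where
  "hball \<alpha> p r = {q. d_alpha \<alpha> q p \<le> r}"

definition rnorm :: "real \<Rightarrow> heis \<Rightarrow> real" where
  "rnorm \<alpha> p = d_alpha \<alpha> (0,0,0) p"

definition Pset :: "real \<Rightarrow> real \<Rightarrow> real \<Rightarrow> heis set" where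
  "Pset a b \<theta> = {p. case p of (x,y,z) \<Rightarrow> x > a \<and> \<bar>z\<bar> < b \<and> \<bar>y\<bar> < x * tan \<theta>}"

end

theory Submission
  imports Defs
begin

text \<open>
  Two points p = (u, y_p, z_p) and q = (v, y_q, z_q) of the truncated cone
  P(a, b, \<theta>) with u \<le> v are compared through the left translate
  p\<inverse> q = (v - u, y_q - y_p, Z) with Z = z_q - z_p + (y_p v - u y_q)/2.
  For the scale R = |(v, y_q)| / \<alpha> the dilated translate lies in the Euclidean
  ball B_\<alpha>, which gives d_\<alpha>(p, q) \<le> R; on the other hand every admissible
  scale for q bounds its horizontal part, so R \<le> r_q.  Hence p \<in> B(q, r_q),
  i.e. two points of the cone can never be mutually outside each other's balls.

  Finally the aperture \<theta>_0 = arctan (1/(c + 2)),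
  c = 3 + 2\<alpha>^2, and the threshold a_0 = 2\<alpha> + 1 are chosen.
\<close>

definition scales :: "real \<Rightarrow> heis \<Rightarrow> real set" where
  "scales \<alpha> w = {r. r > 0 \<and> hdil (1/r) w \<in> eball \<alpha>}"

lemma d_alpha_eq_Inf_scales: "d_alpha \<alpha> p q = Inf (scales \<alpha> (hmult (hinv p) q))"
  by (simp add: d_alpha_def scales_def)

lemma hmult_hinv:
  "hmult (hinv (x, y, z)) (x', y', z') = (x' - x, y' - y, z' - z + (y*x' - x*y')/2)"
  by (simp add: hmult_def hinv_def algebra_simps)

lemma mem_scales_iff:
  assumes "\<alpha> \<ge> 0"
  shows "r \<in> scales \<alpha> (x, y, z) \<longleftrightarrow> r > 0 \<and> (x/r)^2 + (y/r)^2 + (z/r^2)^2 \<le> \<alpha>^2"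
proof -
  have "hdil (1/r) (x, y, z) = (x/r, y/r, z/r^2)"
    by (simp add: hdil_def power_one_over)
  moreover have "sqrt X \<le> \<alpha> \<longleftrightarrow> X \<le> \<alpha>^2" for X
    using assms real_le_lsqrt sqrt_le_D by blast
  ultimately show ?thesis by (simp add: scales_def eball_def)
qed

text \<open>Every point has an admissible scale, so the infimum defining d_\<alpha> is a genuine
  lower bound of the scales; a large scale r \<ge> 1 always works.\<close>
lemma scales_nonempty:
  assumes "\<alpha> > 0"
  shows "scales \<alpha> w \<noteq> {}"
proof -
  obtain x y z where w: "w = (x, y, z)" by (cases w) auto
  define M where "M = x^2 + y^2 + z^2"
  define r where "r = sqrt M / \<alpha> + 1"
  have M0: "M \<ge> 0" unfolding M_def by simp
  have r1: "r \<ge> 1" unfolding r_def using M0 assms by simp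
  have "sqrt M \<le> \<alpha> * r" unfolding r_def using assms by (simp add: algebra_simps)
  hence "M \<le> (\<alpha> * r)^2" using M0 sqrt_le_D by blast
  hence "M / r^2 \<le> \<alpha>^2" using r1 by (simp add: pos_divide_le_eq power_mult_distrib)
  moreover have "(z/r^2)^2 \<le> (z/r)^2"
    using r1 by (simp add: power_divide frac_le power_increasing)
  ultimately have "(x/r)^2 + (y/r)^2 + (z/r^2)^2 \<le> \<alpha>^2"
    unfolding M_def by (simp add: power_divide add_divide_distrib)
  hence "r \<in> scales \<alpha> w" unfolding w using r1 assms by (simp add: mem_scales_iff)
  thus ?thesis by blast
qed

lemma d_alpha_le:
  assumes "\<alpha> \<ge> 0" and "hmult (hinv p) q = (h1, h2, h3)" and "r > 0"
    and "(h1/r)^2 + (h2/r)^2 + (h3/r^2)^2 \<le> \<alpha>^2"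
  shows "d_alpha \<alpha> p q \<le> r"
proof -
  have "r \<in> scales \<alpha> (hmult (hinv p) q)"
    using assms by (simp add: mem_scales_iff)
  moreover have "bdd_below (scales \<alpha> (hmult (hinv p) q))"
    by (rule bdd_belowI[of _ 0]) (simp add: scales_def)
  ultimately show ?thesis
    unfolding d_alpha_eq_Inf_scales by (rule cInf_lower)
qed

text \<open>Lower bound: d_\<alpha>(p, q) dominates the horizontal length of p\<inverse> q divided by \<alpha>,
  since the vertical coordinate only makes admissibility harder.\<close>
lemma horizontal_le_d_alpha:
  assumes "\<alpha> > 0" and "hmult (hinv p) q = (h1, h2, h3)"
  shows "sqrt (h1^2 + h2^2) / \<alpha> \<le> d_alpha \<alpha> p q"
  unfolding d_alpha_eq_Inf_scales
proof (rule cInf_greatest)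
  show "scales \<alpha> (hmult (hinv p) q) \<noteq> {}" using assms(1) by (rule scales_nonempty)
next
  fix r assume "r \<in> scales \<alpha> (hmult (hinv p) q)"
  hence r0: "r > 0" and "(h1/r)^2 + (h2/r)^2 + (h3/r^2)^2 \<le> \<alpha>^2"
    using assms by (simp_all add: mem_scales_iff)
  moreover have "(h1^2 + h2^2) / r^2 = (h1/r)^2 + (h2/r)^2"
    by (simp add: power_divide add_divide_distrib)
  moreover have "0 \<le> (h3/r^2)^2" by simp
  ultimately have "(h1^2 + h2^2) / r^2 \<le> \<alpha>^2" by linarith
  hence "h1^2 + h2^2 \<le> (\<alpha> * r)^2" using r0 by (simp add: pos_divide_le_eq power_mult_distrib)
  hence "sqrt (h1^2 + h2^2) \<le> \<alpha> * r" using assms(1) r0 by (simp add: real_le_lsqrt)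
  thus "sqrt (h1^2 + h2^2) / \<alpha> \<le> r" using assms(1) by (simp add: divide_le_eq mult.commute)
qed

lemma horizontal_le_rnorm:
  assumes "\<alpha> > 0"
  shows "sqrt (x^2 + y^2) / \<alpha> \<le> rnorm \<alpha> (x, y, z)"
  using horizontal_le_d_alpha[OF assms, of "(0,0,0)" "(x, y, z)"]
  by (simp add: rnorm_def hmult_hinv)

lemma cone_horizontal_estimate:
  fixes u v yp yq t :: real
  assumes "0 < u" and "u \<le> v" and "\<bar>yp\<bar> \<le> u*t" and "\<bar>yq\<bar> \<le> v*t"
  shows "(v - u)^2 + (yq - yp)^2 \<le> v^2 + yq^2 - u*v*(1 - 3*t^2)"
proof -
  have "\<bar>yq\<bar> * \<bar>yp\<bar> \<le> (v*t) * (u*t)"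
    using assms by (intro mult_mono) auto
  hence cross: "- (yq*yp) \<le> u*v*t^2"
    using abs_ge_minus_self[of "yq*yp"] by (simp add: abs_mult power2_eq_square algebra_simps)
  have "yp^2 \<le> (u*t)^2" using assms(3) by (metis abs_ge_zero power2_abs power_mono)
  also have "\<dots> = u*u*t^2" by (simp add: power2_eq_square)
  also have "\<dots> \<le> u*v*t^2" using assms(1,2) by (intro mult_right_mono mult_left_mono) auto
  finally have square: "yp^2 \<le> u*v*t^2" .
  have "u^2 \<le> u*v" using assms(1,2) by (simp add: power2_eq_square)
  thus ?thesis using cross square by (simp add: power2_eq_square algebra_simps)
qed

lemma cone_vertical_estimate:
  fixes u v yp yq zp zq t :: real
  assumes "0 \<le> u" and "0 \<le> v" and "\<bar>yp\<bar> \<le> u*t" and "\<bar>yq\<bar> \<le> v*t"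
    and "\<bar>zp\<bar> \<le> 1" and "\<bar>zq\<bar> \<le> 1"
  shows "(zq - zp + (yp*v - u*yq)/2)^2 \<le> 8 + 2*(u*v*t)^2"
proof -
  define X where "X = yp*v - u*yq"
  have "\<bar>yp*v\<bar> \<le> u*v*t" and "\<bar>u*yq\<bar> \<le> u*v*t"
    using assms mult_right_mono[OF assms(3) assms(2)] mult_left_mono[OF assms(4) assms(1)]
    by (simp_all add: abs_mult algebra_simps)
  hence "\<bar>X\<bar> \<le> 2*(u*v*t)" unfolding X_def using abs_triangle_ineq4[of "yp*v" "u*yq"] by linarith
  hence "\<bar>zq - zp + X/2\<bar> \<le> 2 + u*v*t" using assms(5,6) by linarith
  hence "(zq - zp + (yp*v - u*yq)/2)^2 \<le> (2 + u*v*t)^2" unfolding X_def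
    by (meson abs_le_square_iff abs_ge_self order_trans)
  also have "\<dots> \<le> 8 + 2*(u*v*t)^2"
    using sum_squares_ge_zero[of "2 - u*v*t" 0] by (simp add: power2_eq_square algebra_simps)
  finally show ?thesis .
qed

text \<open>Far out in a thin cone the vertical error is absorbed by the horizontal margin:
  \<alpha>^2 (8 + 2(uvt)^2) / v^2 \<le> u v (1 - 3t^2).\<close>
lemma far_cone_estimate:
  fixes \<alpha> u v t :: real
  assumes "\<alpha> > 0" and "2*\<alpha> + 1 \<le> u" and "u \<le> v" and "(3 + 2*\<alpha>^2)*t^2 \<le> 1/2"
  shows "\<alpha>^2 * (8 + 2*(u*v*t)^2) \<le> u*v^3*(1 - 3*t^2)"
proof -
  have u0: "u > 0" using assms by linarith
  have "4*\<alpha> \<le> (2*\<alpha> + 1)^2"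
    using sum_squares_ge_zero[of "2*\<alpha> - 1" 0] by (simp add: power2_eq_square algebra_simps)
  also have "\<dots> \<le> u^2" using assms by (intro power_mono) auto
  finally have "(4*\<alpha>)^2 \<le> (u^2)^2" using assms(1) by (intro power_mono) auto
  also have "(u^2)^2 \<le> u*v^3"
    using power_mono[OF assms(3), of 3] u0 by (simp add: power2_eq_square power3_eq_cube)
  finally have const_term: "8*\<alpha>^2 \<le> u*v^3/2" by (simp add: power2_eq_square)
  have "(u*v)^2 \<le> u*v^3"
    using u0 assms(3) by (simp add: power2_eq_square power3_eq_cube mult_right_mono mult_left_mono)
  hence "(2*\<alpha>^2*t^2)*(u*v)^2 \<le> (2*\<alpha>^2*t^2)*(u*v^3)" by (intro mult_left_mono) auto
  also have "\<dots> \<le> (1/2 - 3*t^2)*(u*v^3)"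
    using assms(4) u0 assms(3) by (intro mult_right_mono) (auto simp: algebra_simps)
  finally have "2*\<alpha>^2*(u*v*t)^2 \<le> (1/2 - 3*t^2)*(u*v^3)"
    by (simp add: power_mult_distrib algebra_simps)
  thus ?thesis using const_term by (simp add: algebra_simps)
qed

lemma cone_d_alpha_le:
  fixes \<alpha> u v yp yq zp zq t :: real
  assumes "\<alpha> > 0" and "2*\<alpha> + 1 \<le> u" and "u \<le> v" and "(3 + 2*\<alpha>^2)*t^2 \<le> 1/2"
    and "\<bar>yp\<bar> \<le> u*t" and "\<bar>yq\<bar> \<le> v*t" and "\<bar>zp\<bar> \<le> 1" and "\<bar>zq\<bar> \<le> 1"
  shows "d_alpha \<alpha> (u, yp, zp) (v, yq, zq) \<le> sqrt (v^2 + yq^2) / \<alpha>"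
proof -
  define Q where "Q = v^2 + yq^2"
  define Z where "Z = zq - zp + (yp*v - u*yq)/2"
  define R where "R = sqrt Q / \<alpha>"
  have u0: "u > 0" and v0: "v > 0" using assms(1-3) by linarith+
  have Qv: "v^2 \<le> Q" unfolding Q_def by simp
  hence Q0: "Q > 0" using v0 by (meson less_le_trans zero_less_power)
  have "\<alpha>^2 * Z^2 / Q \<le> \<alpha>^2 * (8 + 2*(u*v*t)^2) / v^2"
    unfolding Z_def using cone_vertical_estimate[of u v yp t yq zp zq] assms u0 v0 Qv
    by (intro frac_le mult_left_mono) auto
  also have "\<dots> \<le> u*v^3*(1 - 3*t^2) / v^2"
    using far_cone_estimate[OF assms(1-4)] by (simp add: divide_right_mono)
  also have "\<dots> = u*v*(1 - 3*t^2)" using v0 by (simp add: power2_eq_square power3_eq_cube)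
  finally have "(v - u)^2 + (yq - yp)^2 + \<alpha>^2 * Z^2 / Q \<le> Q"
    using cone_horizontal_estimate[OF u0 assms(3,5,6)] unfolding Q_def by linarith
  hence "\<alpha>^2 / Q * ((v - u)^2 + (yq - yp)^2 + \<alpha>^2 * Z^2 / Q) \<le> \<alpha>^2 / Q * Q"
    using Q0 by (intro mult_left_mono) auto
  hence "\<alpha>^2 / Q * ((v - u)^2 + (yq - yp)^2 + \<alpha>^2 * Z^2 / Q) \<le> \<alpha>^2"
    using Q0 by simp
  moreover have "((v - u)/R)^2 + ((yq - yp)/R)^2 + (Z/R^2)^2
      = \<alpha>^2 / Q * ((v - u)^2 + (yq - yp)^2 + \<alpha>^2 * Z^2 / Q)"
    unfolding R_def using Q0 assms(1)
    by (simp add: power_divide field_simps) (simp add: power2_eq_square algebra_simps)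
  ultimately have "d_alpha \<alpha> (u, yp, zp) (v, yq, zq) \<le> R"
    using assms(1) Q0 by (intro d_alpha_le[of _ _ _ "v - u" "yq - yp" Z])
      (simp_all add: hmult_hinv Z_def R_def)
  thus ?thesis unfolding R_def Q_def .
qed

lemma ordered_cone_points_in_ball:
  assumes "\<alpha> > 0" and "2*\<alpha> + 1 \<le> a" and "b \<le> 1" and "(3 + 2*\<alpha>^2)*(tan \<theta>)^2 \<le> 1/2"
    and "p \<in> Pset a b \<theta>" and "q \<in> Pset a b \<theta>" and "fst p \<le> fst q"
  shows "p \<in> hball \<alpha> q (rnorm \<alpha> q)"
proof -
  obtain u yp zp where p: "p = (u, yp, zp)" by (cases p) auto
  obtain v yq zq where q: "q = (v, yq, zq)" by (cases q) auto
  have "a < u" "\<bar>yp\<bar> \<le> u * tan \<theta>" "\<bar>zp\<bar> \<le> 1"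
    using assms(3,5) unfolding p Pset_def by auto
  moreover have "\<bar>yq\<bar> \<le> v * tan \<theta>" "\<bar>zq\<bar> \<le> 1"
    using assms(3,6) unfolding q Pset_def by auto
  ultimately have "d_alpha \<alpha> p q \<le> sqrt (v^2 + yq^2) / \<alpha>"
    using assms(1,2,4,7) unfolding p q by (intro cone_d_alpha_le) auto
  also have "\<dots> \<le> rnorm \<alpha> q" unfolding q using assms(1) by (rule horizontal_le_rnorm)
  finally show ?thesis by (simp add: hball_def)
qed

lemma small_angles_exist:
  fixes c :: real
  assumes "c \<ge> 0"
  shows "\<exists>\<theta>0. 0 < \<theta>0 \<and> \<theta>0 < pi/4 \<and> (\<forall>\<theta>. 0 < \<theta> \<and> \<theta> < \<theta>0 \<longrightarrow> c * (tan \<theta>)^2 \<le> 1/2)"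
proof (intro exI conjI allI impI)
  define s where "s = 1 / (c + 2)"
  have s0: "0 < s" and s1: "s < 1" unfolding s_def using assms by auto
  show "0 < arctan s" using s0 by simp
  show "arctan s < pi/4" using s1 arctan_less_iff[of s 1] by (simp add: arctan_one)
  fix \<theta> assume \<theta>: "0 < \<theta> \<and> \<theta> < arctan s"
  have "0 < tan \<theta>" using \<theta> arctan_ubound[of s] by (intro tan_gt_zero) auto
  moreover have "tan \<theta> < s"
    using \<theta> arctan_ubound[of s] tan_monotone[of \<theta> "arctan s"] by (simp add: tan_arctan)
  ultimately have "c * (tan \<theta>)^2 \<le> c * s^2" using assms by (intro mult_left_mono power_mono) auto
  also have "\<dots> = c / (c + 2)^2" unfolding s_def by (simp add: power_one_over)
  also have "\<dots> \<le> 1/2" using assms by (simp add: divide_le_eq power2_eq_square algebra_simps)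
  finally show "c * (tan \<theta>)^2 \<le> 1/2" .
qed

theorem lemma2p3:
  fixes \<alpha> :: real
  assumes "\<alpha> > 0" and "is_distance (d_alpha \<alpha>)"
  shows "\<exists>\<theta>0. 0 < \<theta>0 \<and> \<theta>0 < pi/4 \<and>
    (\<forall>\<theta>. 0 < \<theta> \<and> \<theta> < \<theta>0 \<longrightarrow>
      (\<exists>a0. a0 \<ge> 1 \<and>
        (\<forall>a b. a > a0 \<and> 0 < b \<and> b < 1 \<longrightarrow>
          (\<forall>p q. p \<notin> hball \<alpha> q (rnorm \<alpha> q) \<and> q \<notin> hball \<alpha> p (rnorm \<alpha> p) \<longrightarrow>
             \<not> (p \<in> Pset a b \<theta> \<and> q \<in> Pset a b \<theta>)))))"
proof -
  obtain \<theta>0 where \<theta>0: "0 < \<theta>0" "\<theta>0 < pi/4"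
    and small: "\<And>\<theta>. 0 < \<theta> \<and> \<theta> < \<theta>0 \<Longrightarrow> (3 + 2*\<alpha>^2) * (tan \<theta>)^2 \<le> 1/2"
    using small_angles_exist[of "3 + 2*\<alpha>^2"] by auto
  have "\<not> (p \<in> Pset a b \<theta> \<and> q \<in> Pset a b \<theta>)"
    if "0 < \<theta> \<and> \<theta> < \<theta>0" and "2*\<alpha> + 1 < a" and "b < 1"
      and "p \<notin> hball \<alpha> q (rnorm \<alpha> q)" and "q \<notin> hball \<alpha> p (rnorm \<alpha> p)" for \<theta> a b p q
  proof -
    have "2*\<alpha> + 1 \<le> a" "b \<le> 1" using that(2,3) by simp_all
    note in_ball = ordered_cone_points_in_ball[OF assms(1) this small[OF that(1)]]
    show ?thesis using in_ball[of p q] in_ball[of q p] that(4,5) by linarith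
  qed
  moreover have "1 \<le> 2*\<alpha> + 1" using assms(1) by simp
  ultimately show ?thesis using \<theta>0 by blast
qed

end
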